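(* Let $f\colon\mathbb{R}^n\to\mathbb{R}$ be convex and differentiable with $\|\nabla f(x)-\nabla f(y)\|\le L\|x-y\|$ for all $x,y\in\mathbb{R}^n$ (Euclidean norm, $L>0$), and assume $f$ has a minimizer $x_\star$; write $f_\star=f(x_\star)$. Let $\{\theta_k\}_{k=0}^\infty$ be a positive sequence with $\theta_0=1$ and $0\le\theta_{k+1}^2-\theta_{k+1}\le\theta_k^2$ for $k=0,1,\dots$. Given $x_0\in\mathbb{R}^n$, let $y_0=x_0$ and for $k=0,1,\dots$ \[ y_{k+1}=x_k-\tfrac1L\nabla f(x_k),\qquad x_{k+1}=y_{k+1}+\frac{\theta_k-1}{\theta_{k+1}}(y_{k+1}-y_k)+\frac{\theta_k}{\theta_{k+1}}(y_{k+1}-x_k). \] Then for $k=1,2,\dots$, \[ f(y_k)-f_\star\le\frac{L\|x_0-x_\star\|^2}{4\theta_{k-1}^2}. \]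
   Context: This iteration is the optimized gradient method (OGM). $\|\cdot\|$ denotes the Euclidean norm. *)

theory Defs
  imports "HOL-Analysis.Analysis"
begin

end

theory Submission
  imports Defs "HOL-Analysis.Analysis"
begin

(* With z_k = theta_k x_k - (theta_k - 1) y_k the method reads
   z_(k+1) = z_k - (2 theta_k / L) grad f(x_k), and the gradient step u+ = u - grad f(u) / L
   lands below step_bound u = f(u) - |grad f(u)|^2 / (2L). The interpolation inequality for
   L-smooth convex functions gives step_bound u - step_bound v <= <grad f(u), u+ - v+>.
   Weighting two instances of it by theta_(k+1)^2 - theta_(k+1) <= theta_k^2 and by theta_(k+1)
   shows that the potential (4 theta_k^2 / L) (step_bound x_k - f_star) + |z_(k+1) - x_star|^2
   never increases; it starts below |x_0 - x_star|^2, and f(y_(k+1)) <= step_bound x_k. *)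

lemma lipschitz_gradient_upper_bound:
  fixes \<phi> :: "'a::real_inner \<Rightarrow> real" and G :: "'a \<Rightarrow> 'a"
  assumes deriv: "\<And>z. (\<phi> has_derivative (\<lambda>h. G z \<bullet> h)) (at z)"
    and lip: "\<And>u v. norm (G u - G v) \<le> L * norm (u - v)"
  shows "\<phi> v \<le> \<phi> u + G u \<bullet> (v - u) + L / 2 * (norm (v - u))\<^sup>2"
proof -
  define e where "e = v - u"
  define h where "h t = \<phi> (u + t *\<^sub>R e) - t * (G u \<bullet> e) - L / 2 * t\<^sup>2 * (norm e)\<^sup>2" for t
  have h_deriv: "(h has_real_derivative (G (u + t *\<^sub>R e) \<bullet> e - G u \<bullet> e - L * t * (norm e)\<^sup>2)) (at t)"
    for t
  proof -
    have "((\<lambda>t. u + t *\<^sub>R e) has_derivative (\<lambda>s. s *\<^sub>R e)) (at t)"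
      by (auto intro!: derivative_eq_intros)
    then have "((\<lambda>t. \<phi> (u + t *\<^sub>R e)) has_derivative (\<lambda>s. G (u + t *\<^sub>R e) \<bullet> (s *\<^sub>R e))) (at t)"
      using has_derivative_compose deriv by blast
    then have chain: "((\<lambda>t. \<phi> (u + t *\<^sub>R e)) has_real_derivative (G (u + t *\<^sub>R e) \<bullet> e)) (at t)"
      by (simp add: has_field_derivative_def mult_commute_abs)
    show ?thesis
      unfolding h_def by (rule derivative_eq_intros chain | simp)+
  qed
  have "h 1 \<le> h 0"
  proof (rule DERIV_nonpos_imp_nonincreasing[of 0 1 h])
    fix t :: real
    assume "0 \<le> t" "t \<le> 1"
    have "G (u + t *\<^sub>R e) \<bullet> e - G u \<bullet> e \<le> norm (G (u + t *\<^sub>R e) - G u) * norm e"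
      by (metis inner_diff_left norm_cauchy_schwarz)
    also have "\<dots> \<le> L * norm (t *\<^sub>R e) * norm e"
      using lip[of "u + t *\<^sub>R e" u] by (simp add: mult_right_mono)
    also have "\<dots> = L * t * (norm e)\<^sup>2"
      using \<open>0 \<le> t\<close> by (simp add: power2_eq_square)
    finally have "G (u + t *\<^sub>R e) \<bullet> e - G u \<bullet> e - L * t * (norm e)\<^sup>2 \<le> 0"
      by simp
    with h_deriv show "\<exists>d. DERIV h t :> d \<and> d \<le> 0"
      by blast
  qed simp
  then show ?thesis
    unfolding h_def e_def by simp
qed

lemma convex_above_tangent_plane:
  fixes f :: "'a::real_inner \<Rightarrow> real"
  assumes cvx: "convex_on UNIV f" and deriv: "(f has_derivative (\<lambda>h. D \<bullet> h)) (at b)"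
  shows "f b + D \<bullet> (w - b) \<le> f w"
proof -
  define e where "e = w - b"
  define h where "h t = f (b + t *\<^sub>R e)" for t :: real
  have "((\<lambda>t. b + t *\<^sub>R e) has_derivative (\<lambda>s. s *\<^sub>R e)) (at 0)"
    by (auto intro!: derivative_eq_intros)
  moreover have "(f has_derivative (\<lambda>h. D \<bullet> h)) (at (b + 0 *\<^sub>R e))"
    using deriv by simp
  ultimately have "(h has_derivative (\<lambda>s. D \<bullet> (s *\<^sub>R e))) (at 0)"
    unfolding h_def by (rule has_derivative_compose)
  then have "(h has_real_derivative (D \<bullet> e)) (at 0)"
    by (simp add: has_field_derivative_def mult_commute_abs)
  moreover have "convex_on UNIV h"
    unfolding h_def
  proof (rule convex_onI)
    fix s t c :: real
    assume "0 < c" "c < 1"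
    moreover have "b + ((1 - c) * s + c * t) *\<^sub>R e = (1 - c) *\<^sub>R (b + s *\<^sub>R e) + c *\<^sub>R (b + t *\<^sub>R e)"
      by (simp add: algebra_simps)
    ultimately show "f (b + ((1 - c) *\<^sub>R s + c *\<^sub>R t) *\<^sub>R e)
        \<le> (1 - c) * f (b + s *\<^sub>R e) + c * f (b + t *\<^sub>R e)"
      using convex_onD[OF cvx, of c] by simp
  qed simp
  ultimately have "(D \<bullet> e) * (1 - 0) \<le> h 1 - h 0"
    by (intro convex_on_imp_above_tangent) auto
  then show ?thesis
    unfolding h_def e_def by simp
qed

lemma norm_diff_scaleR_squared:
  fixes a b :: "'a::real_inner"
  shows "(norm (a - c *\<^sub>R b))\<^sup>2 = (norm a)\<^sup>2 - 2 * c * (b \<bullet> a) + c\<^sup>2 * (norm b)\<^sup>2"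
  unfolding power2_norm_eq_inner
  by (simp add: inner_diff_left inner_diff_right inner_commute algebra_simps power2_eq_square)

lemma gradient_step_descent:
  fixes \<phi> :: "'a::real_inner \<Rightarrow> real" and G :: "'a \<Rightarrow> 'a"
  assumes "\<And>z. (\<phi> has_derivative (\<lambda>h. G z \<bullet> h)) (at z)"
    and "\<And>u v. norm (G u - G v) \<le> L * norm (u - v)"
    and "L > 0"
  shows "\<phi> (u - (1 / L) *\<^sub>R G u) \<le> \<phi> u - (norm (G u))\<^sup>2 / (2 * L)"
proof -
  let ?v = "u - (1 / L) *\<^sub>R G u"
  have "\<phi> ?v \<le> \<phi> u + G u \<bullet> (?v - u) + L / 2 * (norm (?v - u))\<^sup>2"
    using assms(1,2) by (rule lipschitz_gradient_upper_bound)
  also have "G u \<bullet> (?v - u) = - (norm (G u))\<^sup>2 / L"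
    by (simp add: dot_square_norm)
  also have "(norm (?v - u))\<^sup>2 = (norm (G u))\<^sup>2 / L\<^sup>2"
    using \<open>L > 0\<close> by (simp add: power_divide power_mult_distrib)
  finally show ?thesis
    using \<open>L > 0\<close> by (simp add: field_simps power2_eq_square)
qed

locale smooth_convex =
  fixes f :: "'a::real_inner \<Rightarrow> real" and df :: "'a \<Rightarrow> 'a" and L :: real
  assumes convex: "convex_on UNIV f"
    and gradient: "\<And>z. (f has_derivative (\<lambda>h. df z \<bullet> h)) (at z)"
    and lipschitz: "\<And>u v. norm (df u - df v) \<le> L * norm (u - v)"
    and L_pos: "L > 0"
begin

definition grad_step :: "'a \<Rightarrow> 'a"
  where "grad_step u = u - (1 / L) *\<^sub>R df u"

definition step_bound :: "'a \<Rightarrow> real"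
  where "step_bound u = f u - (norm (df u))\<^sup>2 / (2 * L)"

lemma f_grad_step_le: "f (grad_step u) \<le> step_bound u"
  unfolding grad_step_def step_bound_def
  by (rule gradient_step_descent[OF gradient lipschitz L_pos])

lemma interpolation_inequality:
  "f b + df b \<bullet> (a - b) + (norm (df a - df b))\<^sup>2 / (2 * L) \<le> f a"
proof -
  \<comment> \<open>Apply the descent bound to \<phi> = f - \<langle>df b, -\<rangle>, which convexity minimises at b.\<close>
  define \<phi> where "\<phi> w = f w - df b \<bullet> w" for w
  define G where "G w = df w - df b" for w
  have "(\<phi> has_derivative (\<lambda>h. G z \<bullet> h)) (at z)" for z
    unfolding \<phi>_def G_def
    by (rule derivative_eq_intros gradient | simp add: inner_diff_left)+
  moreover have "norm (G u - G v) \<le> L * norm (u - v)" for u v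
    unfolding G_def using lipschitz[of u v] by simp
  ultimately have descent: "\<phi> (a - (1 / L) *\<^sub>R G a) \<le> \<phi> a - (norm (G a))\<^sup>2 / (2 * L)"
    using L_pos by (rule gradient_step_descent)
  have "\<phi> b \<le> \<phi> (a - (1 / L) *\<^sub>R G a)"
    using convex_above_tangent_plane[OF convex gradient, of b "a - (1 / L) *\<^sub>R G a"]
    by (simp add: \<phi>_def inner_diff_right)
  with descent show ?thesis
    by (simp add: \<phi>_def G_def inner_diff_right)
qed

lemma step_bound_diff_le:
  "step_bound u - step_bound v \<le> df u \<bullet> (grad_step u - grad_step v)"
proof -
  let ?a = "(norm (df u))\<^sup>2" and ?b = "(norm (df v))\<^sup>2" and ?c = "df u \<bullet> df v"
  have "(norm (df v - df u))\<^sup>2 / (2 * L) = ?b / (2 * L) - ?c / L + ?a / (2 * L)"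
    using norm_diff_scaleR_squared[of "df v" 1 "df u"] L_pos by (simp add: field_simps)
  then have "f u - f v \<le> df u \<bullet> (u - v) - ?b / (2 * L) + ?c / L - ?a / (2 * L)"
    using interpolation_inequality[of u v] by (simp add: inner_diff_right)
  moreover have "df u \<bullet> (grad_step u - grad_step v) = df u \<bullet> (u - v) - ?a / L + ?c / L"
    by (simp add: grad_step_def inner_diff_right dot_square_norm)
  moreover have "?a / L = 2 * (?a / (2 * L))"
    by simp
  ultimately show ?thesis
    unfolding step_bound_def by linarith
qed

lemma gradient_eq_0_at_minimum:
  assumes "\<And>z. f xmin \<le> f z"
  shows "df xmin = 0"
proof -
  have "(\<lambda>h. df xmin \<bullet> h) = (\<lambda>h. 0)"
    by (rule has_derivative_local_min[OF gradient]) (use assms in auto)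
  then show ?thesis
    by (metis inner_eq_zero_iff)
qed

lemma step_bound_minus_min_le:
  assumes "\<And>z. f xmin \<le> f z"
  shows "step_bound u - f xmin \<le> df u \<bullet> (grad_step u - xmin)"
  using step_bound_diff_le[of u xmin] gradient_eq_0_at_minimum[OF assms]
  by (simp add: step_bound_def grad_step_def)

end

locale optimized_gradient_method = smooth_convex f df L
  for f :: "'a::real_inner \<Rightarrow> real" and df L +
  fixes xstar :: 'a and \<theta> :: "nat \<Rightarrow> real" and x y :: "nat \<Rightarrow> 'a"
  assumes minimizer: "\<And>z. f xstar \<le> f z"
    and \<theta>_pos: "\<And>k. \<theta> k > 0"
    and \<theta>_0: "\<theta> 0 = 1"
    and \<theta>_lower: "\<And>k. 0 \<le> (\<theta> (Suc k))\<^sup>2 - \<theta> (Suc k)"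
    and \<theta>_upper: "\<And>k. (\<theta> (Suc k))\<^sup>2 - \<theta> (Suc k) \<le> (\<theta> k)\<^sup>2"
    and y_Suc: "\<And>k. y (Suc k) = x k - (1 / L) *\<^sub>R df (x k)"
    and x_Suc: "\<And>k. x (Suc k) = y (Suc k)
                  + ((\<theta> k - 1) / \<theta> (Suc k)) *\<^sub>R (y (Suc k) - y k)
                  + (\<theta> k / \<theta> (Suc k)) *\<^sub>R (y (Suc k) - x k)"
begin

lemma y_Suc_eq_grad_step: "y (Suc k) = grad_step (x k)"
  by (simp add: y_Suc grad_step_def)

definition z :: "nat \<Rightarrow> 'a"
  where "z k = \<theta> k *\<^sub>R x k - (\<theta> k - 1) *\<^sub>R y k"

lemma z_0: "z 0 = x 0"
  by (simp add: z_def \<theta>_0)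

lemma z_Suc: "z (Suc k) = z k - (2 * \<theta> k / L) *\<^sub>R df (x k)"
proof -
  have "\<theta> (Suc k) *\<^sub>R x (Suc k)
      = \<theta> (Suc k) *\<^sub>R y (Suc k) + (\<theta> k - 1) *\<^sub>R (y (Suc k) - y k) + \<theta> k *\<^sub>R (y (Suc k) - x k)"
    using \<theta>_pos[of "Suc k"] by (simp add: x_Suc[of k] scaleR_add_right)
  then have "z (Suc k) = z k + \<theta> k *\<^sub>R (y (Suc k) - x k) + \<theta> k *\<^sub>R (y (Suc k) - x k)"
    by (simp add: z_def algebra_simps)
  moreover have "\<theta> k *\<^sub>R (y (Suc k) - x k) = - (\<theta> k / L) *\<^sub>R df (x k)"
    by (simp add: y_Suc)
  moreover have "(2 * \<theta> k / L) *\<^sub>R df (x k) = (\<theta> k / L) *\<^sub>R df (x k) + (\<theta> k / L) *\<^sub>R df (x k)"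
    by (metis mult_2 add_divide_distrib scaleR_add_left)
  ultimately show ?thesis
    by simp
qed

lemma norm_z_Suc_minus_squared:
  "(norm (z (Suc k) - xstar))\<^sup>2 = (norm (z k - xstar))\<^sup>2
     - 4 * \<theta> k / L * (df (x k) \<bullet> (z k - xstar)) + 4 * (\<theta> k)\<^sup>2 / L\<^sup>2 * (norm (df (x k)))\<^sup>2"
proof -
  have "z (Suc k) - xstar = (z k - xstar) - (2 * \<theta> k / L) *\<^sub>R df (x k)"
    by (simp add: z_Suc)
  then show ?thesis
    by (simp only: norm_diff_scaleR_squared) (simp add: power_divide power_mult_distrib)
qed

lemma momentum_combination:
  "((\<theta> j)\<^sup>2 - \<theta> j) *\<^sub>R (y (Suc j) - y j) + \<theta> j *\<^sub>R (y (Suc j) - xstar)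
    = \<theta> j *\<^sub>R (z j - xstar) - ((\<theta> j)\<^sup>2 / L) *\<^sub>R df (x j)"
  by (simp add: y_Suc z_def algebra_simps power2_eq_square)

lemma weighted_gap_Suc_le:
  "(\<theta> (Suc k))\<^sup>2 * (step_bound (x (Suc k)) - f xstar)
    \<le> (\<theta> k)\<^sup>2 * (step_bound (x k) - f xstar) + \<theta> (Suc k) * (df (x (Suc k)) \<bullet> (z (Suc k) - xstar))
       - (\<theta> (Suc k))\<^sup>2 / L * (norm (df (x (Suc k))))\<^sup>2"
proof -
  let ?t = "\<theta> (Suc k)" and ?g = "df (x (Suc k))"
  define P where "P = ?t\<^sup>2 - ?t"
  have "0 \<le> P" "P \<le> (\<theta> k)\<^sup>2"
    using \<theta>_lower[of k] \<theta>_upper[of k] by (simp_all add: P_def)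
  have "0 \<le> step_bound (x k) - f xstar"
    using f_grad_step_le[of "x k"] minimizer[of "grad_step (x k)"] by simp
  then have "P * (step_bound (x k) - f xstar) \<le> (\<theta> k)\<^sup>2 * (step_bound (x k) - f xstar)"
    by (rule mult_right_mono[OF \<open>P \<le> (\<theta> k)\<^sup>2\<close>])
  moreover have "P * (step_bound (x (Suc k)) - step_bound (x k)) \<le> P * (?g \<bullet> (y (Suc (Suc k)) - y (Suc k)))"
    using step_bound_diff_le[of "x (Suc k)" "x k"] \<open>0 \<le> P\<close>
    by (simp add: y_Suc_eq_grad_step mult_left_mono)
  moreover have "?t * (step_bound (x (Suc k)) - f xstar) \<le> ?t * (?g \<bullet> (y (Suc (Suc k)) - xstar))"
    using step_bound_minus_min_le[OF minimizer, of "x (Suc k)"] \<theta>_pos[of "Suc k"]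
    by (simp add: y_Suc_eq_grad_step)
  moreover have "P * (?g \<bullet> (y (Suc (Suc k)) - y (Suc k))) + ?t * (?g \<bullet> (y (Suc (Suc k)) - xstar))
      = ?g \<bullet> (P *\<^sub>R (y (Suc (Suc k)) - y (Suc k)) + ?t *\<^sub>R (y (Suc (Suc k)) - xstar))"
    by (simp add: inner_add_right)
  moreover have "\<dots> = ?t * (?g \<bullet> (z (Suc k) - xstar)) - ?t\<^sup>2 / L * (norm ?g)\<^sup>2"
    unfolding P_def momentum_combination by (simp add: inner_diff_right dot_square_norm)
  moreover have "?t\<^sup>2 * (step_bound (x (Suc k)) - f xstar)
      = P * (step_bound (x k) - f xstar) + P * (step_bound (x (Suc k)) - step_bound (x k))
        + ?t * (step_bound (x (Suc k)) - f xstar)"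
    by (simp add: P_def algebra_simps power2_eq_square)
  ultimately show ?thesis
    by linarith
qed

definition potential :: "nat \<Rightarrow> real"
  where "potential k = 4 * (\<theta> k)\<^sup>2 / L * (step_bound (x k) - f xstar) + (norm (z (Suc k) - xstar))\<^sup>2"

lemma potential_0_le: "potential 0 \<le> (norm (x 0 - xstar))\<^sup>2"
proof -
  let ?g = "df (x 0)"
  have "step_bound (x 0) - f xstar \<le> ?g \<bullet> (x 0 - xstar) - (norm ?g)\<^sup>2 / L"
    using step_bound_minus_min_le[OF minimizer, of "x 0"]
    by (simp add: grad_step_def inner_diff_right dot_square_norm)
  then have "4 / L * (step_bound (x 0) - f xstar) \<le> 4 / L * (?g \<bullet> (x 0 - xstar) - (norm ?g)\<^sup>2 / L)"
    using L_pos by (intro mult_left_mono) auto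
  also have "\<dots> = 4 / L * (?g \<bullet> (x 0 - xstar)) - 4 / L\<^sup>2 * (norm ?g)\<^sup>2"
    using L_pos by (simp add: field_simps power2_eq_square)
  finally show ?thesis
    unfolding potential_def norm_z_Suc_minus_squared z_0 \<theta>_0 by simp
qed

lemma potential_Suc_le: "potential (Suc k) \<le> potential k"
proof -
  let ?t = "\<theta> (Suc k)" and ?g = "df (x (Suc k))"
  have "potential (Suc k) = potential k + 4 / L * (?t\<^sup>2 * (step_bound (x (Suc k)) - f xstar)
      - (\<theta> k)\<^sup>2 * (step_bound (x k) - f xstar) - ?t * (?g \<bullet> (z (Suc k) - xstar))
      + ?t\<^sup>2 / L * (norm ?g)\<^sup>2)"
    unfolding potential_def norm_z_Suc_minus_squared[of "Suc k"]
    using L_pos by (simp add: field_simps power2_eq_square)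
  also have "\<dots> \<le> potential k"
    unfolding add_le_same_cancel1
    by (rule mult_nonneg_nonpos) (use L_pos weighted_gap_Suc_le[of k] in auto)
  finally show ?thesis .
qed

lemma potential_le: "potential k \<le> (norm (x 0 - xstar))\<^sup>2"
proof (induction k)
  case 0
  show ?case by (rule potential_0_le)
next
  case (Suc k)
  with potential_Suc_le[of k] show ?case by linarith
qed

theorem convergence_rate:
  "f (y (Suc k)) - f xstar \<le> L * (norm (x 0 - xstar))\<^sup>2 / (4 * (\<theta> k)\<^sup>2)"
proof -
  have "4 * (\<theta> k)\<^sup>2 / L * (step_bound (x k) - f xstar) \<le> potential k"
    by (simp add: potential_def)
  also have "\<dots> \<le> (norm (x 0 - xstar))\<^sup>2"
    by (rule potential_le)
  finally have "step_bound (x k) - f xstar \<le> L * (norm (x 0 - xstar))\<^sup>2 / (4 * (\<theta> k)\<^sup>2)"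
    using L_pos \<theta>_pos[of k] by (simp add: field_simps)
  then show ?thesis
    using f_grad_step_le[of "x k"] by (simp add: y_Suc_eq_grad_step)
qed

end

theorem theorem1:
  fixes f :: "real ^ 'n \<Rightarrow> real"
    and df :: "real ^ 'n \<Rightarrow> real ^ 'n"
    and L :: real
    and xstar :: "real ^ 'n"
    and \<theta> :: "nat \<Rightarrow> real"
    and x y :: "nat \<Rightarrow> real ^ 'n"
  assumes cvx: "convex_on UNIV f"
    and grad: "\<And>z. (f has_derivative (\<lambda>h. df z \<bullet> h)) (at z)"
    and lip: "\<And>u v. norm (df u - df v) \<le> L * norm (u - v)"
    and Lpos: "L > 0"
    and minim: "\<And>z. f xstar \<le> f z"
    and \<theta>pos: "\<And>k. \<theta> k > 0"
    and \<theta>0: "\<theta> 0 = 1"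
    and \<theta>lo: "\<And>k. 0 \<le> (\<theta> (Suc k))\<^sup>2 - \<theta> (Suc k)"
    and \<theta>hi: "\<And>k. (\<theta> (Suc k))\<^sup>2 - \<theta> (Suc k) \<le> (\<theta> k)\<^sup>2"
    and y0: "y 0 = x 0"
    and ystep: "\<And>k. y (Suc k) = x k - (1 / L) *\<^sub>R df (x k)"
    and xstep: "\<And>k. x (Suc k) = y (Suc k)
                  + ((\<theta> k - 1) / \<theta> (Suc k)) *\<^sub>R (y (Suc k) - y k)
                  + (\<theta> k / \<theta> (Suc k)) *\<^sub>R (y (Suc k) - x k)"
    and k1: "k \<ge> 1"
  shows "f (y k) - f xstar \<le> L * (norm (x 0 - xstar))\<^sup>2 / (4 * (\<theta> (k - 1))\<^sup>2)"
proof -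
  interpret optimized_gradient_method f df L xstar \<theta> x y
    by unfold_locales (fact cvx grad lip Lpos minim \<theta>pos \<theta>0 \<theta>lo \<theta>hi ystep xstep)+
  obtain m where "k = Suc m"
    using k1 by (cases k) auto
  then show ?thesis
    using convergence_rate[of m] by simp
qed

end
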